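(* Let $G$ be a $\Delta$-regular multigraph of even order, and let $S \subsetneq V(G)$ with $|S|$ odd and $|S| \ge 3$ be such that $\langle S\rangle$ is $\Delta$-full or $\Delta$-overfull, and such that $\operatorname{ex}(\langle S\rangle, \Delta)$ is maximum among all induced odd-order subgraphs of $G$ of order at least 3 that are $\Delta$-full or $\Delta$-overfull. Then $\Delta(G_S) \le \Delta$ and $\Gamma(G_S) \le \Gamma(G)$, and similarly $\Delta(G_{S^c}) \le \Delta$ and $\Gamma(G_{S^c}) \le \Gamma(G)$, where $S^c = V(G)\setminus S$.
   Context: Multigraphs are finite and loopless, multiple edges allowed. For $S \subseteq V(G)$, $\langle S\rangle$ is the induced subgraph and $\partial(S)$ the set of edges with exactly one end in $S$. For a multigraph $H$ of odd order $n(H)\ge 3$ with $e(H)$ edges, $t(H) = 2e(H)/(n(H)-1)$; $H$ is $k$-full if $t(H)=k$ and $k$-overfull if $t(H)>k$. The $k$-excess is $\operatorname{ex}(H,k) = e(H) - k(n(H)-1)/2$. $\Gamma(G) = \max\{t(\langle R\rangle) : R\subseteq V(G), |R| \text{ odd}, |R|\ge 3\}$ (statements about $\Gamma$ of a multigraph with no such $R$ are vacuous). Shrinking: for a nonempty proper subset $S$ of $V(G)$, $G_S$ has vertex set $(V(G)\setminus S)\cup\{s\}$ for a new vertex $s$; its edges are the edges of $G - S$ together with, for each $u \notin S$, exactly as many edges $us$ as there are edges of $G$ joining $u$ to vertices of $S$. *)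

theory Defs
  imports Complex_Main
begin

text \<open>A (finite, loopless) multigraph is given by a vertex set V and an edge
multiplicity function m: m u v is the number of edges joining u and v.\<close>

definition multigraph :: "'a set \<Rightarrow> ('a \<Rightarrow> 'a \<Rightarrow> nat) \<Rightarrow> bool" where
  "multigraph V m \<longleftrightarrow> finite V \<and> (\<forall>u v. m u v = m v u) \<and> (\<forall>v. m v v = 0)
     \<and> (\<forall>u v. m u v \<noteq> 0 \<longrightarrow> u \<in> V \<and> v \<in> V)"

definition deg :: "'a set \<Rightarrow> ('a \<Rightarrow> 'a \<Rightarrow> nat) \<Rightarrow> 'a \<Rightarrow> nat" where
  "deg V m v = (\<Sum>u\<in>V. m v u)"

definition regular :: "'a set \<Rightarrow> ('a \<Rightarrow> 'a \<Rightarrow> nat) \<Rightarrow> nat \<Rightarrow> bool" where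
  "regular V m k \<longleftrightarrow> (\<forall>v\<in>V. deg V m v = k)"

definition max_deg :: "'a set \<Rightarrow> ('a \<Rightarrow> 'a \<Rightarrow> nat) \<Rightarrow> nat" where
  "max_deg V m = Max (deg V m ` V)"

definition e_ind :: "('a \<Rightarrow> 'a \<Rightarrow> nat) \<Rightarrow> 'a set \<Rightarrow> nat" where
  "e_ind m R = (\<Sum>u\<in>R. \<Sum>v\<in>R. m u v) div 2"

definition t_ind :: "('a \<Rightarrow> 'a \<Rightarrow> nat) \<Rightarrow> 'a set \<Rightarrow> real" where
  "t_ind m R = 2 * real (e_ind m R) / (real (card R) - 1)"

definition ex_ind :: "('a \<Rightarrow> 'a \<Rightarrow> nat) \<Rightarrow> 'a set \<Rightarrow> nat \<Rightarrow> real" where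
  "ex_ind m R k = real (e_ind m R) - real k * (real (card R) - 1) / 2"

definition odd_sets :: "'a set \<Rightarrow> 'a set set" where
  "odd_sets V = {R. R \<subseteq> V \<and> odd (card R) \<and> card R \<ge> 3}"

definition Gamma_set :: "'a set \<Rightarrow> ('a \<Rightarrow> 'a \<Rightarrow> nat) \<Rightarrow> real set" where
  "Gamma_set V m = t_ind m ` odd_sets V"

definition Gamma :: "'a set \<Rightarrow> ('a \<Rightarrow> 'a \<Rightarrow> nat) \<Rightarrow> real" where
  "Gamma V m = Max (Gamma_set V m)"

text \<open>Shrinking S to a new vertex: vertices of G_S are Some u (u \<notin> S) and the
new vertex None.\<close>
definition shrink_V :: "'a set \<Rightarrow> 'a set \<Rightarrow> 'a option set" where
  "shrink_V V S = Some ` (V - S) \<union> {None}"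

definition shrink_m :: "'a set \<Rightarrow> ('a \<Rightarrow> 'a \<Rightarrow> nat) \<Rightarrow> 'a set \<Rightarrow> 'a option \<Rightarrow> 'a option \<Rightarrow> nat" where
  "shrink_m V m S x y =
     (if x \<in> shrink_V V S \<and> y \<in> shrink_V V S then
        (case (x, y) of
           (Some u, Some v) \<Rightarrow> m u v
         | (Some u, None) \<Rightarrow> (\<Sum>w\<in>S. m u w)
         | (None, Some v) \<Rightarrow> (\<Sum>w\<in>S. m w v)
         | (None, None) \<Rightarrow> 0)
      else 0)"

end

theory Submission
  imports Defs
begin

text \<open>With \<open>edge_sum m A B = (\<Sum>u\<in>A. \<Sum>v\<in>B. m u v)\<close>, regularity gives
\<open>edge_sum m S V = \<Delta> |S|\<close>, so \<Delta>-fullness of \<open>S\<close> gives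
\<open>|\<partial>(S)| \<le> \<Delta>\<close>; this is the degree of the new vertex of \<open>G\<^sub>S\<close> and of \<open>G\<^sub>S\<^sup>c\<close>, and all
other degrees are unchanged.

An odd set of \<open>G\<^sub>T\<close> (\<open>T = S\<close> or \<open>T = S\<^sup>c\<close>) either avoids the new vertex, and then is an odd
set of \<open>G\<close>, or consists of the new vertex and an even set \<open>R \<subseteq> V - T\<close>, and then has
density \<open>(edge_sum m R R + 2 edge_sum m R T) / |R|\<close>. If that exceeded \<open>\<Delta>\<close>, the odd set
\<open>R \<union> S\<close> (for \<open>T = S\<close>), resp. \<open>S - R\<close> (for \<open>T = S\<^sup>c\<close>), would have larger \<open>\<Delta>\<close>-excess
than \<open>S\<close>. Since \<open>\<Delta> \<le> t(\<langle>S\<rangle>) \<le> \<Gamma>(G)\<close>, this bounds \<open>\<Gamma>(G\<^sub>T)\<close>.\<close>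

text \<open>For disjoint \<open>A\<close>, \<open>B\<close> this is the number of edges between them, and
\<open>edge_sum m A A = 2 e(\<langle>A\<rangle>)\<close>.\<close>

definition edge_sum :: "('a \<Rightarrow> 'a \<Rightarrow> nat) \<Rightarrow> 'a set \<Rightarrow> 'a set \<Rightarrow> nat" where
  "edge_sum m A B = (\<Sum>u\<in>A. \<Sum>v\<in>B. m u v)"

lemma edge_sum_commute:
  assumes "multigraph V m" shows "edge_sum m A B = edge_sum m B A"
  using assms unfolding edge_sum_def multigraph_def by (subst sum.swap) simp

lemma edge_sum_Un_left:
  "finite A \<Longrightarrow> finite B \<Longrightarrow> A \<inter> B = {} \<Longrightarrow> edge_sum m (A \<union> B) C = edge_sum m A C + edge_sum m B C"
  unfolding edge_sum_def by (rule sum.union_disjoint)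

lemma edge_sum_Un_right:
  "finite B \<Longrightarrow> finite C \<Longrightarrow> B \<inter> C = {} \<Longrightarrow> edge_sum m A (B \<union> C) = edge_sum m A B + edge_sum m A C"
  unfolding edge_sum_def by (simp add: sum.union_disjoint sum.distrib)

lemma edge_sum_Un_Un:
  assumes "multigraph V m" "finite A" "finite B" "A \<inter> B = {}"
  shows "edge_sum m (A \<union> B) (A \<union> B) = edge_sum m A A + 2 * edge_sum m A B + edge_sum m B B"
  using assms edge_sum_commute[OF assms(1), of B A]
  by (simp add: edge_sum_Un_left edge_sum_Un_right Int_commute)

lemma even_edge_sum_self:
  assumes "multigraph V m" "finite R" shows "even (edge_sum m R R)"
  using assms(2)
proof (induction R rule: finite_induct)
  case empty then show ?case by (simp add: edge_sum_def)
next
  case (insert a F)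
  have "edge_sum m (insert a F) (insert a F) = edge_sum m F F + 2 * edge_sum m {a} F"
    using edge_sum_Un_Un[OF assms(1), of "{a}" F] insert(1,2) assms(1)
    by (simp add: edge_sum_def multigraph_def)
  then show ?case using insert(3) by simp
qed

lemma edge_sum_regular:
  assumes "regular V m k" "A \<subseteq> V" shows "edge_sum m A V = k * card A"
  using assms by (simp add: edge_sum_def deg_def[symmetric] regular_def subset_iff)

lemma real_e_ind:
  assumes "multigraph V m" "finite R" shows "real (e_ind m R) = real (edge_sum m R R) / 2"
  using even_edge_sum_self[OF assms] by (auto simp: e_ind_def edge_sum_def[symmetric] elim!: evenE)

lemma t_ind_eq_edge_sum:
  assumes "multigraph V m" "finite R" shows "t_ind m R = real (edge_sum m R R) / (real (card R) - 1)"
  using real_e_ind[OF assms] by (simp add: t_ind_def)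

lemma ex_ind_eq_edge_sum:
  assumes "multigraph V m" "finite R"
  shows "ex_ind m R k = (real (edge_sum m R R) - real k * (real (card R) - 1)) / 2"
  using real_e_ind[OF assms] by (simp add: ex_ind_def diff_divide_distrib)

lemma ex_ind_eq_t_ind:
  "card R \<noteq> 1 \<Longrightarrow> ex_ind m R k = (real (card R) - 1) * (t_ind m R - real k) / 2"
  by (simp add: ex_ind_def t_ind_def field_simps)

lemma ex_ind_nonneg_iff:
  "card R \<ge> 2 \<Longrightarrow> 0 \<le> ex_ind m R k \<longleftrightarrow> real k \<le> t_ind m R"
  by (simp add: ex_ind_eq_t_ind zero_le_mult_iff)

lemma ex_ind_Un_disjoint:
  assumes "multigraph V m" "finite A" "finite B" "A \<inter> B = {}"
  shows "ex_ind m (A \<union> B) k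
           = ex_ind m B k + (real (edge_sum m A A + 2 * edge_sum m A B) - real k * real (card A)) / 2"
  using assms by (simp add: ex_ind_eq_edge_sum edge_sum_Un_Un card_Un_disjoint field_simps)

lemma boundary_le_of_excess_nonneg:
  assumes "multigraph V m" "regular V m k" "S \<subseteq> V" "0 \<le> ex_ind m S k"
  shows "edge_sum m S (V - S) \<le> k"
proof -
  have fin: "finite S" "finite (V - S)"
    using assms(1,3) finite_subset by (auto simp: multigraph_def)
  have "real (edge_sum m S S) + real (edge_sum m S (V - S)) = real k * real (card S)"
    using edge_sum_Un_right[OF fin, of m S] edge_sum_regular[OF assms(2,3)] assms(3)
    by (metis Diff_disjoint Un_Diff_cancel Un_absorb1 of_nat_add of_nat_mult)
  then show ?thesis using assms(4) ex_ind_eq_edge_sum[OF assms(1) fin(1), of k]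
    by (simp add: algebra_simps)
qed

lemma shrink_V_eq: "shrink_V V T = insert None (Some ` (V - T))"
  by (simp add: shrink_V_def)

lemma shrink_m_simps:
  "u \<in> V - T \<Longrightarrow> v \<in> V - T \<Longrightarrow> shrink_m V m T (Some u) (Some v) = m u v"
  "u \<in> V - T \<Longrightarrow> shrink_m V m T (Some u) None = (\<Sum>w\<in>T. m u w)"
  "v \<in> V - T \<Longrightarrow> shrink_m V m T None (Some v) = (\<Sum>w\<in>T. m w v)"
  "shrink_m V m T None None = 0"
  by (simp_all add: shrink_m_def shrink_V_def)

lemma multigraph_shrink:
  assumes "multigraph V m" shows "multigraph (shrink_V V T) (shrink_m V m T)"
proof -
  have "finite (shrink_V V T)" using assms by (simp add: shrink_V_eq multigraph_def)
  moreover have "shrink_m V m T x y = shrink_m V m T y x" for x y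
    using assms by (cases x; cases y) (auto simp: shrink_m_def multigraph_def)
  moreover have "shrink_m V m T x x = 0" for x
    using assms by (cases x) (auto simp: shrink_m_def multigraph_def)
  moreover have "shrink_m V m T x y \<noteq> 0 \<Longrightarrow> x \<in> shrink_V V T \<and> y \<in> shrink_V V T" for x y
    by (simp add: shrink_m_def split: if_splits)
  ultimately show ?thesis unfolding multigraph_def by blast
qed

lemma deg_shrink_Some:
  assumes "finite V" "T \<subseteq> V" "u \<in> V - T"
  shows "deg (shrink_V V T) (shrink_m V m T) (Some u) = deg V m u"
proof -
  have "deg (shrink_V V T) (shrink_m V m T) (Some u) = (\<Sum>w\<in>T. m u w) + (\<Sum>v\<in>V - T. m u v)"
    unfolding deg_def shrink_V_eq using assms
    by (simp add: sum.reindex shrink_m_simps)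
  also have "\<dots> = deg V m u"
    unfolding deg_def using assms by (simp add: sum.subset_diff[of T V])
  finally show ?thesis .
qed

lemma deg_shrink_None:
  assumes "finite V" shows "deg (shrink_V V T) (shrink_m V m T) None = edge_sum m T (V - T)"
proof -
  have "deg (shrink_V V T) (shrink_m V m T) None = (\<Sum>v\<in>V - T. \<Sum>w\<in>T. m w v)"
    unfolding deg_def shrink_V_eq using assms by (simp add: sum.reindex shrink_m_simps)
  then show ?thesis unfolding edge_sum_def by (metis sum.swap)
qed

lemma max_deg_shrink_le:
  assumes "multigraph V m" "regular V m k" "T \<subseteq> V" "edge_sum m T (V - T) \<le> k"
  shows "max_deg (shrink_V V T) (shrink_m V m T) \<le> k"
proof -
  have fin: "finite V" using assms(1) by (simp add: multigraph_def)
  have "deg (shrink_V V T) (shrink_m V m T) x \<le> k" if "x \<in> shrink_V V T" for x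
    using that assms(2,4) deg_shrink_None[OF fin] deg_shrink_Some[OF fin assms(3)]
    by (cases x) (auto simp: shrink_V_eq regular_def)
  then show ?thesis
    using fin unfolding max_deg_def by (simp add: shrink_V_eq Max_le_iff)
qed

lemma edge_sum_shrink_Some:
  assumes "R \<subseteq> V - T"
  shows "edge_sum (shrink_m V m T) (Some ` R) (Some ` R) = edge_sum m R R"
  unfolding edge_sum_def using assms
  by (auto simp: sum.reindex intro!: sum.cong shrink_m_simps(1))

lemma edge_sum_shrink_insert_None:
  assumes "multigraph V m" "R \<subseteq> V - T"
  shows "edge_sum (shrink_m V m T) (insert None (Some ` R)) (insert None (Some ` R))
           = edge_sum m R R + 2 * edge_sum m R T"
proof -
  have fin: "finite R" using assms finite_subset by (auto simp: multigraph_def)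
  have "edge_sum (shrink_m V m T) (insert None (Some ` R)) (insert None (Some ` R))
          = edge_sum (shrink_m V m T) (Some ` R) (Some ` R) + 2 * edge_sum (shrink_m V m T) (Some ` R) {None}"
    using edge_sum_Un_Un[OF multigraph_shrink[OF assms(1)], of "Some ` R" "{None}"] fin
    by (simp add: edge_sum_def shrink_m_simps)
  also have "edge_sum (shrink_m V m T) (Some ` R) {None} = edge_sum m R T"
    unfolding edge_sum_def using assms(2) by (auto simp: sum.reindex shrink_m_simps intro!: sum.cong)
  finally show ?thesis using edge_sum_shrink_Some[OF assms(2)] by simp
qed

lemma odd_set_shrinkE:
  assumes "multigraph V m" "T \<subseteq> V" "R \<in> odd_sets (shrink_V V T)"
  obtains R' where "R' \<in> odd_sets V" "t_ind (shrink_m V m T) R = t_ind m R'"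
    | R' where "R' \<subseteq> V - T" "even (card R')" "card R' \<ge> 2"
        "t_ind (shrink_m V m T) R = real (edge_sum m R' R' + 2 * edge_sum m R' T) / real (card R')"
proof -
  define R' where "R' = {u. Some u \<in> R}"
  have R: "R \<subseteq> shrink_V V T" "odd (card R)" "card R \<ge> 3" using assms(3) by (auto simp: odd_sets_def)
  have R': "R' \<subseteq> V - T" using R(1) by (auto simp: R'_def shrink_V_eq)
  have fin: "finite R'" using R' assms(1) finite_subset by (auto simp: multigraph_def)
  have finR: "finite R"
    using finite_subset[OF R(1)] multigraph_shrink[OF assms(1)] by (simp add: multigraph_def)
  have t_shrink: "t_ind (shrink_m V m T) R
                    = real (edge_sum (shrink_m V m T) R R) / (real (card R) - 1)"
    by (rule t_ind_eq_edge_sum[OF multigraph_shrink[OF assms(1)] finR])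
  have "R - {None} = Some ` R'"
    by (rule set_eqI, case_tac x) (auto simp: R'_def)
  show thesis
  proof (cases "None \<in> R")
    case True
    then have R_eq: "R = insert None (Some ` R')" using \<open>R - {None} = Some ` R'\<close> by blast
    then have card: "card R = card R' + 1" using fin by (simp add: card_image)
    show thesis
    proof (rule that(2)[OF R'])
      show "even (card R')" "card R' \<ge> 2" using card R(2,3) by auto
      show "t_ind (shrink_m V m T) R = real (edge_sum m R' R' + 2 * edge_sum m R' T) / real (card R')"
        unfolding t_shrink card unfolding R_eq edge_sum_shrink_insert_None[OF assms(1) R'] by simp
    qed
  next
    case False
    then have R_eq: "R = Some ` R'" using \<open>R - {None} = Some ` R'\<close> by blast
    then have card: "card R = card R'" by (simp add: card_image)
    show thesis
    proof (rule that(1))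
      show "R' \<in> odd_sets V" using R R' card by (auto simp: odd_sets_def)
      show "t_ind (shrink_m V m T) R = t_ind m R'"
        unfolding t_shrink t_ind_eq_edge_sum[OF assms(1) fin] card
        unfolding R_eq edge_sum_shrink_Some[OF R'] ..
    qed
  qed
qed

lemma t_ind_le_Gamma:
  assumes "finite V" "R \<in> odd_sets V" shows "t_ind m R \<le> Gamma V m"
proof -
  have "odd_sets V \<subseteq> Pow V" by (auto simp: odd_sets_def)
  then have "finite (odd_sets V)" using assms(1) by (simp add: finite_subset)
  then show ?thesis using assms(2) unfolding Gamma_def Gamma_set_def by (intro Max_ge) auto
qed

lemma Gamma_set_shrink_le:
  assumes "multigraph V m" "T \<subseteq> V" "c \<le> Gamma V m"
    and bound: "\<And>R'. R' \<subseteq> V - T \<Longrightarrow> even (card R') \<Longrightarrow> card R' \<ge> 2 \<Longrightarrow>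
                  real (edge_sum m R' R' + 2 * edge_sum m R' T) \<le> c * real (card R')"
    and "x \<in> Gamma_set (shrink_V V T) (shrink_m V m T)"
  shows "x \<le> Gamma V m"
proof -
  obtain R where R: "R \<in> odd_sets (shrink_V V T)" and x: "x = t_ind (shrink_m V m T) R"
    using assms(5) by (auto simp: Gamma_set_def)
  show ?thesis
  proof (rule odd_set_shrinkE[OF assms(1,2) R])
    fix R' assume "R' \<in> odd_sets V" "t_ind (shrink_m V m T) R = t_ind m R'"
    moreover have "finite V" using assms(1) by (simp add: multigraph_def)
    ultimately show ?thesis using x t_ind_le_Gamma by metis
  next
    fix R' assume "R' \<subseteq> V - T" "even (card R')" "card R' \<ge> 2"
      "t_ind (shrink_m V m T) R = real (edge_sum m R' R' + 2 * edge_sum m R' T) / real (card R')"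
    then have "x \<le> c" using bound[of R'] x by (simp add: divide_le_eq)
    then show ?thesis using assms(3) by simp
  qed
qed

text \<open>An odd set of larger excess than \<open>S\<close> has positive excess, so it is overfull and the
maximality of \<open>S\<close> applies to it.\<close>

lemma ex_ind_le_of_max_excess:
  assumes max: "\<And>R. R \<in> odd_sets V \<Longrightarrow> t_ind m R \<ge> real k \<Longrightarrow> ex_ind m R k \<le> ex_ind m S k"
    and "0 \<le> ex_ind m S k" "Q \<in> odd_sets V"
  shows "ex_ind m Q k \<le> ex_ind m S k"
proof (rule ccontr)
  assume gt: "\<not> ex_ind m Q k \<le> ex_ind m S k"
  then have "0 \<le> ex_ind m Q k" using assms(2) by simp
  then have "t_ind m Q \<ge> real k" using assms(3) ex_ind_nonneg_iff by (force simp: odd_sets_def)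
  then show False using max[OF assms(3)] gt by simp
qed

lemma edge_sum_outside_le_of_max_excess:
  assumes mg: "multigraph V m" and S: "S \<in> odd_sets V"
    and max: "\<And>R. R \<in> odd_sets V \<Longrightarrow> t_ind m R \<ge> real k \<Longrightarrow> ex_ind m R k \<le> ex_ind m S k"
    and ex_S: "0 \<le> ex_ind m S k"
    and R: "R \<subseteq> V - S" "even (card R)"
  shows "real (edge_sum m R R + 2 * edge_sum m R S) \<le> real k * real (card R)"
proof -
  have fin: "finite R" "finite S" and disj: "R \<inter> S = {}"
    using mg S R finite_subset by (auto simp: multigraph_def odd_sets_def)
  have "R \<union> S \<in> odd_sets V"
    using S R card_Un_disjoint[OF fin disj] by (auto simp: odd_sets_def)
  then have "ex_ind m (R \<union> S) k \<le> ex_ind m S k" using ex_ind_le_of_max_excess[OF max ex_S] by blast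
  then show ?thesis using ex_ind_Un_disjoint[OF mg fin disj, of k] by simp
qed

lemma edge_sum_inside_le_of_max_excess:
  assumes mg: "multigraph V m" and reg: "regular V m k" and S: "S \<in> odd_sets V"
    and max: "\<And>R. R \<in> odd_sets V \<Longrightarrow> t_ind m R \<ge> real k \<Longrightarrow> ex_ind m R k \<le> ex_ind m S k"
    and ex_S: "0 \<le> ex_ind m S k"
    and R: "R \<subseteq> S" "even (card R)"
  shows "real (edge_sum m R R + 2 * edge_sum m R (V - S)) \<le> real k * real (card R)"
proof -
  define U where "U = S - R"
  have SV: "S \<subseteq> V" and "odd (card S)" using S by (auto simp: odd_sets_def)
  have "finite S" using mg SV finite_subset by (auto simp: multigraph_def)
  then have fin: "finite R" "finite U" "finite (V - S)"
    using mg R finite_subset by (auto simp: multigraph_def U_def)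
  have S_eq: "S = R \<union> U" and disj: "R \<inter> U = {}" using R by (auto simp: U_def)
  have odd_U: "odd (card U)"
    using \<open>odd (card S)\<close> R card_Un_disjoint[OF fin(1,2) disj] S_eq by auto
  have ex_U: "ex_ind m U k \<le> ex_ind m S k"
  proof (cases "card U \<ge> 3")
    case True
    then have "U \<in> odd_sets V" using odd_U SV by (auto simp: odd_sets_def U_def)
    then show ?thesis using ex_ind_le_of_max_excess[OF max ex_S] by blast
  next
    case False
    then have "card U = 1" using odd_U by presburger
    then obtain a where "U = {a}" by (rule card_1_singletonE)
    then show ?thesis using mg ex_S by (simp add: ex_ind_def e_ind_def multigraph_def)
  qed
  have "edge_sum m R V = edge_sum m R R + edge_sum m R U + edge_sum m R (V - S)"
    using edge_sum_Un_right[of R U m R] edge_sum_Un_right[of S "V - S" m R] fin disj S_eq SV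
    by (metis Diff_disjoint Diff_partition finite_Un)
  then have "real (edge_sum m R R) + real (edge_sum m R U) + real (edge_sum m R (V - S))
               = real k * real (card R)"
    using edge_sum_regular[OF reg] R SV by (metis of_nat_add of_nat_mult order_trans)
  then show ?thesis using ex_U ex_ind_Un_disjoint[OF mg fin(1,2) disj, of k] S_eq by simp
qed

theorem lemmaG:
  fixes V :: "'a set" and m :: "'a \<Rightarrow> 'a \<Rightarrow> nat" and \<Delta> :: nat and S :: "'a set"
  assumes mg: "multigraph V m"
    and reg: "regular V m \<Delta>"
    and even_order: "even (card V)"
    and S_sub: "S \<subset> V"
    and S_odd: "odd (card S)"
    and S_card: "card S \<ge> 3"
    and S_full: "t_ind m S \<ge> real \<Delta>"
    and S_max: "\<And>R. R \<in> odd_sets V \<Longrightarrow> t_ind m R \<ge> real \<Delta> \<Longrightarrow>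
                  ex_ind m R \<Delta> \<le> ex_ind m S \<Delta>"
  shows "max_deg (shrink_V V S) (shrink_m V m S) \<le> \<Delta>
       \<and> (\<forall>x\<in>Gamma_set (shrink_V V S) (shrink_m V m S). x \<le> Gamma V m)
       \<and> max_deg (shrink_V V (V - S)) (shrink_m V m (V - S)) \<le> \<Delta>
       \<and> (\<forall>x\<in>Gamma_set (shrink_V V (V - S)) (shrink_m V m (V - S)). x \<le> Gamma V m)"
proof -
  have SV: "S \<subseteq> V" and S: "S \<in> odd_sets V" using S_sub S_odd S_card by (auto simp: odd_sets_def)
  have ex_S: "0 \<le> ex_ind m S \<Delta>" using S_full S_card ex_ind_nonneg_iff[of S m \<Delta>] by simp
  have "finite V" using mg by (simp add: multigraph_def)
  then have Gamma: "real \<Delta> \<le> Gamma V m" using S_full t_ind_le_Gamma[OF _ S, of m] by linarith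
  have boundary: "edge_sum m S (V - S) \<le> \<Delta>"
    by (rule boundary_le_of_excess_nonneg[OF mg reg SV ex_S])
  have "max_deg (shrink_V V S) (shrink_m V m S) \<le> \<Delta>"
    using max_deg_shrink_le[OF mg reg SV boundary] .
  moreover have "max_deg (shrink_V V (V - S)) (shrink_m V m (V - S)) \<le> \<Delta>"
    using max_deg_shrink_le[OF mg reg, of "V - S"] boundary edge_sum_commute[OF mg, of "V - S" S]
    by (simp add: double_diff SV)
  moreover have "x \<le> Gamma V m" if "x \<in> Gamma_set (shrink_V V S) (shrink_m V m S)" for x
    using Gamma_set_shrink_le[OF mg SV Gamma _ that]
      edge_sum_outside_le_of_max_excess[OF mg S S_max ex_S] by (simp add: mult.commute)
  moreover have "x \<le> Gamma V m" if "x \<in> Gamma_set (shrink_V V (V - S)) (shrink_m V m (V - S))" for x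
    using Gamma_set_shrink_le[OF mg _ Gamma _ that]
      edge_sum_inside_le_of_max_excess[OF mg reg S S_max ex_S] by (simp add: double_diff SV mult.commute)
  ultimately show ?thesis by blast
qed

end
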